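(* Let $(\mathcal{P},\cdot)$ be a finite-dimensional admissible Poisson algebra which is not a nilalgebra. Then $\mathcal{P}$ contains a non-zero idempotent $e$, i.e. $e\ne0$ and $e\cdot e=e$.
   Context: $\mathbb{K}$ is a field of characteristic different from $2$ and $3$. Associator: $A(X,Y,Z)=(X\cdot Y)\cdot Z-X\cdot(Y\cdot Z)$. An admissible Poisson algebra is a $\mathbb{K}$-vector space $\mathcal{P}$ with a bilinear product $\cdot$ satisfying $3A(X,Y,Z)=(X\cdot Z)\cdot Y+(Y\cdot Z)\cdot X-(Y\cdot X)\cdot Z-(Z\cdot X)\cdot Y$ for all $X,Y,Z$. Powers: $X^1=X$, $X^{i+1}=X\cdot X^i$. An element $X$ is nilpotent if $X^r=0$ for some $r$; $\mathcal{P}$ is a nilalgebra if every element is nilpotent. *)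

theory Defs
  imports Complex_Main
begin

definition assoc :: "('v \<Rightarrow> 'v \<Rightarrow> 'v) \<Rightarrow> 'v \<Rightarrow> 'v \<Rightarrow> 'v \<Rightarrow> 'v::ab_group_add" where
  "assoc m X Y Z = m (m X Y) Z - m X (m Y Z)"

definition bilinear_prod :: "('k::field \<Rightarrow> 'v \<Rightarrow> 'v) \<Rightarrow> ('v \<Rightarrow> 'v \<Rightarrow> 'v::ab_group_add) \<Rightarrow> bool" where
  "bilinear_prod scale m \<longleftrightarrow>
     (\<forall>x y z. m (x + y) z = m x z + m y z) \<and>
     (\<forall>x y z. m x (y + z) = m x y + m x z) \<and>
     (\<forall>a x y. m (scale a x) y = scale a (m x y)) \<and>
     (\<forall>a x y. m x (scale a y) = scale a (m x y))"

definition admissible_poisson :: "('k::field \<Rightarrow> 'v \<Rightarrow> 'v) \<Rightarrow> ('v \<Rightarrow> 'v \<Rightarrow> 'v::ab_group_add) \<Rightarrow> bool" where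
  "admissible_poisson scale m \<longleftrightarrow>
     (\<forall>X Y Z. scale 3 (assoc m X Y Z) =
        m (m X Z) Y + m (m Y Z) X - m (m Y X) Z - m (m Z X) Y)"

text \<open>Powers: ppow m X i = X^(i+1), where X^1 = X and X^(j+1) = X \<cdot> X^j.\<close>
primrec ppow :: "('v \<Rightarrow> 'v \<Rightarrow> 'v) \<Rightarrow> 'v \<Rightarrow> nat \<Rightarrow> 'v" where
  "ppow m X 0 = X"
| "ppow m X (Suc i) = m X (ppow m X i)"

definition nilpotent_elem :: "('v \<Rightarrow> 'v \<Rightarrow> 'v) \<Rightarrow> 'v::zero \<Rightarrow> bool" where
  "nilpotent_elem m X \<longleftrightarrow> (\<exists>i. ppow m X i = 0)"

definition nilalgebra :: "('v \<Rightarrow> 'v \<Rightarrow> 'v::zero) \<Rightarrow> bool" where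
  "nilalgebra m \<longleftrightarrow> (\<forall>X. nilpotent_elem m X)"

end

theory Submission
  imports Defs
begin

(* Three times the associator of the anticommutator xy + yx, and three times the defect of
   the commutator [x, -] from being a derivation of it, are signed sums of instances of the
   admissible identity; as char \<noteq> 3, the anticommutator is associative and [x, -] is a
   derivation of it. Hence x commutes with its powers, so the powers of x for \<cdot> and for
   x \<circ> y = (xy + yx)/2 coincide, and e \<circ> e = e \<cdot> e.
   In the finite-dimensional associative algebra (P, \<circ>) the subspaces S_r spanned by the
   powers x^j, j \<ge> r, decrease and so stabilise: x^r \<circ> S_1 = S_(r+1) = S_r. Hence
   x^r = x^r \<circ> y for some y \<in> S_1, and e = y^r \<in> S_r is a right unit of S_r; in particular
   e \<circ> e = e, and e \<noteq> 0 because x^r \<noteq> 0 for non-nilpotent x. *)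

declare ppow.simps(2) [simp del]

context vector_space
begin

lemma scale_2: "(2::'a) *s v = v + v"
proof -
  have "(2::'a) *s v = (1 + 1) *s v" by simp
  also have "\<dots> = v + v" by (simp only: scale_left_distrib scale_one)
  finally show ?thesis .
qed

lemma scale_3: "(3::'a) *s v = v + v + v"
proof -
  have "(3::'a) *s v = (1 + 1 + 1) *s v" by simp
  also have "\<dots> = v + v + v" by (simp only: scale_left_distrib scale_one)
  finally show ?thesis .
qed

end

locale bilinear_product = vector_space scale
  for scale :: "'k::field \<Rightarrow> 'v::ab_group_add \<Rightarrow> 'v" (infixr \<open>*s\<close> 75) +
  fixes mult :: "'v \<Rightarrow> 'v \<Rightarrow> 'v" (infixl \<open>\<cdot>\<close> 70)
  assumes bilinear: "bilinear_prod scale mult"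
begin

lemma module_hom_mult_left: "module_hom scale scale (\<lambda>x. x \<cdot> z)"
  using bilinear by unfold_locales (simp_all add: bilinear_prod_def)

lemma module_hom_mult_right: "module_hom scale scale (\<lambda>z. x \<cdot> z)"
  using bilinear by unfold_locales (simp_all add: bilinear_prod_def)

lemma mult_add_left: "(x + y) \<cdot> z = x \<cdot> z + y \<cdot> z"
  and mult_diff_left: "(x - y) \<cdot> z = x \<cdot> z - y \<cdot> z"
  and mult_minus_left: "(- x) \<cdot> z = - (x \<cdot> z)"
  and mult_zero_left: "0 \<cdot> z = 0"
  and mult_scale_left: "(a *s x) \<cdot> z = a *s (x \<cdot> z)"
  using module_hom.add[OF module_hom_mult_left] module_hom.diff[OF module_hom_mult_left]
    module_hom.neg[OF module_hom_mult_left] module_hom.zero[OF module_hom_mult_left]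
    module_hom.scale[OF module_hom_mult_left] by blast+

lemma mult_add_right: "z \<cdot> (x + y) = z \<cdot> x + z \<cdot> y"
  and mult_diff_right: "z \<cdot> (x - y) = z \<cdot> x - z \<cdot> y"
  and mult_minus_right: "z \<cdot> (- x) = - (z \<cdot> x)"
  and mult_zero_right: "z \<cdot> 0 = 0"
  and mult_scale_right: "z \<cdot> (a *s x) = a *s (z \<cdot> x)"
  using module_hom.add[OF module_hom_mult_right] module_hom.diff[OF module_hom_mult_right]
    module_hom.neg[OF module_hom_mult_right] module_hom.zero[OF module_hom_mult_right]
    module_hom.scale[OF module_hom_mult_right] by blast+

lemmas mult_linear = mult_add_left mult_diff_left mult_minus_left mult_zero_left
  mult_add_right mult_diff_right mult_minus_right mult_zero_right

definition anticommutator where "anticommutator x y = x \<cdot> y + y \<cdot> x"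

definition commutator where "commutator x y = x \<cdot> y - y \<cdot> x"

lemma anticommutator_scale_left: "anticommutator (a *s x) y = a *s anticommutator x y"
  and anticommutator_scale_right: "anticommutator x (a *s y) = a *s anticommutator x y"
  by (simp_all add: anticommutator_def mult_scale_left mult_scale_right scale_right_distrib)

definition admissible_defect where
  "admissible_defect X Y Z =
     (3::'k) *s assoc mult X Y Z - ((X \<cdot> Z) \<cdot> Y + (Y \<cdot> Z) \<cdot> X - (Y \<cdot> X) \<cdot> Z - (Z \<cdot> X) \<cdot> Y)"

lemma anticommutator_associator_eq_defects:
  "(3::'k) *s (anticommutator (anticommutator x y) z - anticommutator x (anticommutator y z))
     = admissible_defect x y z + admissible_defect x z y
       - admissible_defect z x y - admissible_defect z y x"
  unfolding admissible_defect_def anticommutator_def assoc_def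
  by (simp add: scale_3 mult_linear algebra_simps)

lemma commutator_Leibniz_eq_defects:
  "(3::'k) *s (commutator x (anticommutator y z)
       - anticommutator (commutator x y) z - anticommutator y (commutator x z))
     = admissible_defect y x z - admissible_defect x y z - admissible_defect x z y
       - admissible_defect y z x + admissible_defect z x y - admissible_defect z y x"
  unfolding admissible_defect_def anticommutator_def commutator_def assoc_def
  by (simp add: scale_3 mult_linear algebra_simps)

end

context finite_dimensional_vector_space
begin

lemma decreasing_subspace_chain_stabilizes:
  assumes "\<And>r. subspace (S r)" and "\<And>r. S (Suc r) \<subseteq> S r"
  shows "\<exists>r. S (Suc r) = S r"
proof (rule ccontr)
  assume "\<nexists>r. S (Suc r) = S r"
  then have dim_decreases: "dim (S (Suc r)) < dim (S r)" for r
    using assms subspace_dim_equal[of "S (Suc r)" "S r"] by (meson not_le)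
  have "dim (S r) + r \<le> dim (S 0)" for r
  proof (induction r)
    case (Suc r)
    then show ?case using dim_decreases[of r] by simp
  qed simp
  from this[of "Suc (dim (S 0))"] show False by simp
qed

end

locale assoc_algebra = bilinear_product +
  assumes mult_assoc: "(x \<cdot> y) \<cdot> z = x \<cdot> (y \<cdot> z)"
begin

lemma ppow_mult_ppow: "ppow mult x i \<cdot> ppow mult x j = ppow mult x (i + j + 1)"
  by (induction i) (simp_all add: ppow.simps(2) mult_assoc)

definition power_span where
  "power_span x r = span {ppow mult x j | j. r \<le> j}"

lemma ppow_in_power_span: "r \<le> j \<Longrightarrow> ppow mult x j \<in> power_span x r"
  unfolding power_span_def by (rule span_base) auto

lemma subspace_power_span: "subspace (power_span x r)"
  unfolding power_span_def by simp

lemma power_span_Suc_subset: "power_span x (Suc r) \<subseteq> power_span x r"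
  unfolding power_span_def by (rule span_mono) auto

lemma power_span_mult:
  assumes "u \<in> power_span x a" and "v \<in> power_span x b"
  shows "u \<cdot> v \<in> power_span x (a + b + 1)"
proof -
  have "ppow mult x i \<cdot> v \<in> power_span x (a + b + 1)" if "a \<le> i" for i
    using assms(2) unfolding power_span_def[of x b]
  proof (induction rule: span_induct_alt)
    case base then show ?case by (simp add: mult_zero_right subspace_power_span subspace_0)
  next
    case (step c g w)
    then obtain j where "g = ppow mult x j" "b \<le> j" by blast
    with \<open>a \<le> i\<close> have "ppow mult x i \<cdot> g \<in> power_span x (a + b + 1)"
      by (simp add: ppow_mult_ppow ppow_in_power_span)
    with step.IH show ?case
      by (simp add: mult_add_right mult_scale_right subspace_power_span subspace_add subspace_scale)
  qed
  with assms(1) show ?thesis unfolding power_span_def[of x a]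
  proof (induction rule: span_induct_alt)
    case base then show ?case by (simp add: mult_zero_left subspace_power_span subspace_0)
  next
    case (step c g w)
    then show ?case
      by (auto simp: mult_add_left mult_scale_left subspace_power_span subspace_add subspace_scale)
  qed
qed

lemma power_span_Suc_eq_image: "power_span x (Suc r) = (\<lambda>y. ppow mult x r \<cdot> y) ` power_span x 0"
proof -
  have "{ppow mult x j | j. Suc r \<le> j} = (\<lambda>y. ppow mult x r \<cdot> y) ` {ppow mult x j | j. 0 \<le> j}"
  proof safe
    fix j assume "Suc r \<le> j"
    then have "ppow mult x j = ppow mult x r \<cdot> ppow mult x (j - Suc r)"
      by (simp add: ppow_mult_ppow)
    then show "ppow mult x j \<in> (\<lambda>y. ppow mult x r \<cdot> y) ` {ppow mult x j | j. 0 \<le> j}"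
      by blast
  qed (auto simp: ppow_mult_ppow)
  then show ?thesis
    unfolding power_span_def by (simp add: module_hom.span_image[OF module_hom_mult_right])
qed

lemma ppow_of_power_span_0_in_power_span:
  assumes "y \<in> power_span x 0"
  shows "ppow mult y k \<in> power_span x k"
proof (induction k)
  case 0 then show ?case using assms by simp
next
  case (Suc k) then show ?case using power_span_mult[OF assms Suc] by (simp add: ppow.simps(2))
qed

lemma subspace_fixed_by_right_mult: "subspace {v. v \<cdot> e = v}"
  by (simp add: subspace_def mult_zero_left mult_add_left mult_scale_left)

lemma exists_idempotent_if_power_span_stable:
  assumes stable: "power_span x (Suc r) = power_span x r" and nonzero: "ppow mult x r \<noteq> 0"
  shows "\<exists>e. e \<noteq> 0 \<and> e \<cdot> e = e"
proof -
  have "ppow mult x r \<in> power_span x (Suc r)"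
    using stable by (simp add: ppow_in_power_span)
  then obtain y where y: "y \<in> power_span x 0" and xr_y: "ppow mult x r \<cdot> y = ppow mult x r"
    unfolding power_span_Suc_eq_image by auto
  define e where "e = ppow mult y r"
  have xr_e: "ppow mult x r \<cdot> ppow mult y k = ppow mult x r" for k
  proof (induction k)
    case (Suc k)
    have "ppow mult x r \<cdot> ppow mult y (Suc k) = (ppow mult x r \<cdot> y) \<cdot> ppow mult y k"
      by (simp add: ppow.simps(2) mult_assoc)
    then show ?case using xr_y Suc by simp
  qed (use xr_y in simp)
  have "ppow mult x j \<cdot> e = ppow mult x j" if "r \<le> j" for j
    using that
  proof (induction j rule: dec_induct)
    case base then show ?case by (simp add: e_def xr_e)
  next
    case (step j) then show ?case by (simp add: ppow.simps(2) mult_assoc)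
  qed
  then have "power_span x r \<subseteq> {v. v \<cdot> e = v}"
    unfolding power_span_def by (intro span_minimal subspace_fixed_by_right_mult) auto
  moreover have "e \<in> power_span x r"
    unfolding e_def by (rule ppow_of_power_span_0_in_power_span[OF y])
  moreover have "e \<noteq> 0"
    using xr_e[of r] nonzero by (auto simp: e_def mult_zero_right)
  ultimately show ?thesis by blast
qed

end

locale finite_dimensional_assoc_algebra =
  finite_dimensional_vector_space scale Basis + assoc_algebra scale mult
  for scale :: "'k::field \<Rightarrow> 'v::ab_group_add \<Rightarrow> 'v" (infixr \<open>*s\<close> 75)
  and Basis :: "'v set"
  and mult :: "'v \<Rightarrow> 'v \<Rightarrow> 'v" (infixl \<open>\<cdot>\<close> 70)
begin

theorem exists_idempotent_if_not_nilpotent: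
  assumes "\<not> nilpotent_elem mult x"
  shows "\<exists>e. e \<noteq> 0 \<and> e \<cdot> e = e"
proof -
  obtain r where "power_span x (Suc r) = power_span x r"
    using decreasing_subspace_chain_stabilizes[of "power_span x"]
      subspace_power_span power_span_Suc_subset by blast
  moreover have "ppow mult x r \<noteq> 0"
    using assms by (auto simp: nilpotent_elem_def)
  ultimately show ?thesis by (rule exists_idempotent_if_power_span_stable)
qed

end

locale admissible_poisson_algebra = bilinear_product scale mult
  for scale :: "'k::field \<Rightarrow> 'v::ab_group_add \<Rightarrow> 'v" (infixr \<open>*s\<close> 75)
  and mult :: "'v \<Rightarrow> 'v \<Rightarrow> 'v" (infixl \<open>\<cdot>\<close> 70) +
  assumes char_not_2: "(2::'k) \<noteq> 0" and char_not_3: "(3::'k) \<noteq> 0"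
    and admissible: "admissible_poisson scale mult"
begin

lemma admissible_defect_eq_0: "admissible_defect X Y Z = 0"
  using admissible by (simp add: admissible_poisson_def admissible_defect_def)

lemma anticommutator_assoc:
  "anticommutator (anticommutator x y) z = anticommutator x (anticommutator y z)"
  using anticommutator_associator_eq_defects[of x y z] char_not_3
  by (simp add: admissible_defect_eq_0)

lemma commutator_anticommutator:
  "commutator x (anticommutator y z)
     = anticommutator (commutator x y) z + anticommutator y (commutator x z)"
proof -
  have "commutator x (anticommutator y z)
      - anticommutator (commutator x y) z - anticommutator y (commutator x z) = 0"
    using commutator_Leibniz_eq_defects[of x y z] char_not_3 by (simp add: admissible_defect_eq_0)
  then show ?thesis by (simp add: algebra_simps)
qed

lemma commutator_mult_self:
  assumes "commutator x q = 0"
  shows "commutator x (x \<cdot> q) = 0"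
proof -
  have "commutator x (anticommutator x q)
      = anticommutator (commutator x x) q + anticommutator x (commutator x q)"
    by (rule commutator_anticommutator)
  also have "\<dots> = 0"
    using assms by (simp add: commutator_def anticommutator_def mult_linear)
  finally have "commutator x (anticommutator x q) = 0" .
  moreover have "commutator x (anticommutator x q) = (2::'k) *s commutator x (x \<cdot> q)"
    using assms by (simp add: scale_2 commutator_def anticommutator_def mult_linear algebra_simps)
  ultimately show ?thesis using char_not_2 by simp
qed

lemma commutator_ppow: "commutator x (ppow mult x n) = 0"
proof (induction n)
  case (Suc n)
  then show ?case unfolding ppow.simps(2) by (rule commutator_mult_self)
qed (simp add: commutator_def)

definition sym_prod where "sym_prod x y = (1/2::'k) *s anticommutator x y"

lemma half_double: "(1/2::'k) *s (v + v) = v"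
  using char_not_2 by (simp add: scale_2[symmetric])

lemma sym_prod_self: "sym_prod x x = x \<cdot> x"
  by (simp add: sym_prod_def anticommutator_def half_double)

lemma ppow_sym_prod: "ppow sym_prod x n = ppow mult x n"
proof (induction n)
  case (Suc n)
  have "ppow mult x n \<cdot> x = x \<cdot> ppow mult x n"
    using commutator_ppow[of x n] by (simp add: commutator_def)
  with Suc show ?case
    by (simp add: ppow.simps(2) sym_prod_def anticommutator_def half_double)
qed simp

sublocale sym: assoc_algebra scale sym_prod
proof
  show "bilinear_prod scale sym_prod"
    by (simp add: bilinear_prod_def sym_prod_def anticommutator_def mult_linear
        mult_scale_left mult_scale_right algebra_simps)
  show "sym_prod (sym_prod x y) z = sym_prod x (sym_prod y z)" for x y z
    by (simp add: sym_prod_def anticommutator_scale_left anticommutator_scale_right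
        anticommutator_assoc)
qed

end

theorem mainTheorem4:
  fixes scale :: "'k::field \<Rightarrow> 'v::ab_group_add \<Rightarrow> 'v"
    and m :: "'v \<Rightarrow> 'v \<Rightarrow> 'v"
  assumes char2: "(2::'k) \<noteq> 0"
    and char3: "(3::'k) \<noteq> 0"
    and fdim: "\<exists>B. finite_dimensional_vector_space scale B"
    and bil: "bilinear_prod scale m"
    and adm: "admissible_poisson scale m"
    and notnil: "\<not> nilalgebra m"
  shows "\<exists>e. e \<noteq> 0 \<and> m e e = e"
proof -
  obtain B where B: "finite_dimensional_vector_space scale B"
    using fdim by blast
  interpret P: admissible_poisson_algebra scale m
    by (intro admissible_poisson_algebra.intro bilinear_product.intro
        admissible_poisson_algebra_axioms.intro finite_dimensional_vector_space.axioms(1)[OF B]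
        bilinear_product_axioms.intro bil char2 char3 adm)
  interpret F: finite_dimensional_assoc_algebra scale B P.sym_prod
    by (intro finite_dimensional_assoc_algebra.intro B P.sym.assoc_algebra_axioms)
  obtain x where "\<not> nilpotent_elem m x"
    using notnil unfolding nilalgebra_def by blast
  then have "\<not> nilpotent_elem P.sym_prod x"
    by (simp add: nilpotent_elem_def P.ppow_sym_prod)
  then obtain e where "e \<noteq> 0" and "P.sym_prod e e = e"
    using F.exists_idempotent_if_not_nilpotent by blast
  then show ?thesis
    by (metis P.sym_prod_self)
qed

end
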